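(* Let $\mathbb F\in\{\mathbb R,\mathbb C\}$ and let $\hat U,\tilde U:(0,1]\to GL_n(\mathbb F)$ be continuous. Suppose $\hat U$ contracts the Lie algebra $\mathfrak g$ (structure constants $c^k_{ij}$ in a fixed basis) to the algebra $\hat{\mathfrak g}$ (structure constants $\hat c^k_{ij}$) and $\tilde U$ contracts $\hat{\mathfrak g}$ to the algebra $\tilde{\mathfrak g}$ (structure constants $\tilde c^k_{ij}$). Then there exists a continuous monotonic function $f:(0,1]\to(0,1]$ with $f(\varepsilon)\to0$ as $\varepsilon\to0^+$ such that $\check U_\varepsilon=\hat U_{f(\varepsilon)}\tilde U_\varepsilon$ contracts $\mathfrak g$ to $\tilde{\mathfrak g}$.
   Context: A continuous $U:(0,1]\to GL_n(\mathbb F)$ contracts the algebra with structure constants $c^k_{ij}$ (in a fixed basis) to the algebra with structure constants $c'^{k'}_{i'j'}$ if $\lim_{\varepsilon\to0^+}(U_\varepsilon)^i_{i'}(U_\varepsilon)^j_{j'}(U^{-1}_\varepsilon)^{k'}_kc^k_{ij}=c'^{k'}_{i'j'}$ for all indices (summation over repeated indices). *)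

theory Defs
  imports "HOL-Analysis.Analysis"
begin

text \<open>Structure constants in a fixed basis indexed by the finite type 'n:
  c i j k stands for c^k_{ij}, i.e. [e_i, e_j] = sum_k c^k_{ij} e_k.\<close>

definition is_lie_structure_constants :: "('n::finite \<Rightarrow> 'n \<Rightarrow> 'n \<Rightarrow> 'a::comm_ring_1) \<Rightarrow> bool" where
  "is_lie_structure_constants c \<longleftrightarrow>
     (\<forall>i j k. c i j k = - c j i k) \<and>
     (\<forall>i j l m. (\<Sum>k\<in>UNIV. c i j k * c k l m + c j l k * c k i m + c l i k * c k j m) = 0)"

text \<open>U contracts the algebra with structure constants c to the algebra with structure
  constants c': U is a continuous map (0,1] -> GL_n(F) and
  lim_{eps->0+} U^i_{i'} U^j_{j'} (U^{-1})^{k'}_k c^k_{ij} = c'^{k'}_{i'j'}.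
  The entry (U)^i_{i'} is row i, column i', i.e. U $ i $ i'.\<close>

definition contracts ::
  "(real \<Rightarrow> 'a::{real_normed_field}^'n::finite^'n) \<Rightarrow> ('n \<Rightarrow> 'n \<Rightarrow> 'n \<Rightarrow> 'a) \<Rightarrow> ('n \<Rightarrow> 'n \<Rightarrow> 'n \<Rightarrow> 'a) \<Rightarrow> bool" where
  "contracts U c c' \<longleftrightarrow>
     continuous_on {0<..1} U \<and>
     (\<forall>e\<in>{0<..1}. invertible (U e)) \<and>
     (\<forall>i' j' k'.
        ((\<lambda>e. \<Sum>i\<in>UNIV. \<Sum>j\<in>UNIV. \<Sum>k\<in>UNIV.
              U e $ i $ i' * U e $ j $ j' * matrix_inv (U e) $ k' $ k * c i j k)
          \<longlongrightarrow> c' i' j' k') (at_right 0))"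

end

theory Submission
  imports Defs
begin

text \<open>Write \<open>T(U, c)\<close> for the structure constants \<open>c\<close> transformed by \<open>U\<close>. \<open>T\<close> is linear in
  \<open>c\<close> and \<open>T(A B, c) = T(B, T(A, c))\<close>, so
  \<open>T(\<hat>U\<^sub>f\<^sub>(\<^sub>\<epsilon>\<^sub>) \<tilde>U\<^sub>\<epsilon>, c) = T(\<tilde>U\<^sub>\<epsilon>, \<hat>c) + T(\<tilde>U\<^sub>\<epsilon>, T(\<hat>U\<^sub>f\<^sub>(\<^sub>\<epsilon>\<^sub>), c) - \<hat>c)\<close>.
  The first term tends to \<open>\<tilde>c\<close>. The second is bounded by \<open>M(\<epsilon>) \<delta>(f(\<epsilon>))\<close>, where
  \<open>M(\<epsilon>)\<close> depends continuously on \<open>\<tilde>U\<^sub>\<epsilon>\<close> and \<open>\<delta>(s) = |T(\<hat>U\<^sub>s, c) - \<hat>c| \<rightarrow> 0\<close>. So it suffices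
  to let \<open>f\<close> tend to \<open>0\<close> so fast that \<open>M(\<epsilon>) \<delta>(f(\<epsilon>)) \<le> \<epsilon>\<close>; since \<open>M\<close> is bounded on every
  \<open>[\<epsilon>, 1]\<close>, the admissible values of \<open>f(\<epsilon>)\<close> can be bounded below by a positive monotone
  function, and its largest 1-Lipschitz minorant is a continuous monotone choice of \<open>f\<close>.\<close>

lemma matrix_inv_right:
  fixes A :: "'a::semiring_1^'n^'n"
  assumes "invertible A"
  shows "A ** matrix_inv A = mat 1"
  using someI_ex[OF assms[unfolded invertible_def]] by (simp add: matrix_inv_def)

lemma matrix_inv_left:
  fixes A :: "'a::semiring_1^'n^'n"
  assumes "invertible A"
  shows "matrix_inv A ** A = mat 1"
  using someI_ex[OF assms[unfolded invertible_def]] by (simp add: matrix_inv_def)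

lemma matrix_inv_unique:
  fixes A B :: "'a::semiring_1^'n^'n"
  assumes "A ** B = mat 1" "B ** A = mat 1"
  shows "matrix_inv A = B"
proof -
  have "invertible A" using assms unfolding invertible_def by blast
  have "matrix_inv A = matrix_inv A ** (A ** B)"
    by (simp add: assms(1))
  also have "\<dots> = B"
    by (simp add: matrix_mul_assoc matrix_inv_left[OF \<open>invertible A\<close>])
  finally show ?thesis .
qed

lemma matrix_inv_mult:
  fixes A B :: "'a::semiring_1^'n^'n"
  assumes "invertible A" "invertible B"
  shows "matrix_inv (A ** B) = matrix_inv B ** matrix_inv A"
proof (rule matrix_inv_unique)
  show "A ** B ** (matrix_inv B ** matrix_inv A) = mat 1"
    by (metis assms matrix_mul_assoc matrix_mul_rid matrix_inv_right)
  show "matrix_inv B ** matrix_inv A ** (A ** B) = mat 1"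
    by (metis assms matrix_mul_assoc matrix_mul_rid matrix_inv_left)
qed

lemma matrix_inv_component:
  fixes A :: "'a::field^'n::finite^'n"
  assumes "invertible A"
  shows "matrix_inv A $ i $ k = det (\<chi> r s. if s = i then (if r = k then 1 else 0) else A $ r $ s) / det A"
proof -
  define x where "x = (\<chi> r. matrix_inv A $ r $ k)"
  have "A *v x = (\<chi> r. (A ** matrix_inv A) $ r $ k)"
    by (simp add: x_def matrix_vector_mult_def matrix_matrix_mult_def)
  also have "\<dots> = (\<chi> r. if r = k then 1 else 0)"
    by (simp add: matrix_inv_right[OF assms] mat_def)
  finally have Ax: "A *v x = (\<chi> r. if r = k then 1 else 0)" .
  have "det (\<chi> r s. if s = i then (if r = k then 1 else 0) else A $ r $ s) =
      det (\<chi> r s. if s = i then (A *v x) $ r else A $ r $ s)"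
    unfolding Ax by (intro arg_cong[where f=det]) (simp add: vec_eq_iff)
  also have "\<dots> = x $ i * det A"
    by (rule cramer_lemma)
  finally show ?thesis
    using assms by (simp add: x_def invertible_det_nz)
qed

lemma continuous_on_det:
  fixes A :: "'b::topological_space \<Rightarrow> 'a::real_normed_field^'n^'n"
  assumes "continuous_on S A"
  shows "continuous_on S (\<lambda>x. det (A x))"
  unfolding det_def by (intro continuous_intros continuous_on_component assms)

lemma continuous_on_matrix_inv:
  fixes A :: "'b::topological_space \<Rightarrow> 'a::real_normed_field^'n^'n"
  assumes cont: "continuous_on S A" and inv: "\<And>x. x \<in> S \<Longrightarrow> invertible (A x)"
  shows "continuous_on S (\<lambda>x. matrix_inv (A x))"
proof -
  have entries: "continuous_on S (\<lambda>x. if s = i then (if r = k then 1 else 0) else A x $ r $ s)"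
    for i k r s
    by (cases "s = i") (auto intro!: continuous_on_component cont)
  have "continuous_on S
      (\<lambda>x. \<chi> i k. det (\<chi> r s. if s = i then (if r = k then 1 else 0) else A x $ r $ s) / det (A x))"
    using inv by (intro continuous_on_vec_lambda continuous_on_divide continuous_on_det entries cont)
      (auto simp: invertible_det_nz)
  then show ?thesis
    by (rule continuous_on_cong[THEN iffD1, rotated 2])
      (simp_all add: vec_eq_iff matrix_inv_component inv)
qed

lemma continuous_on_matrix_mult:
  fixes A B :: "'b::topological_space \<Rightarrow> 'a::real_normed_field^'n^'n"
  assumes "continuous_on S A" "continuous_on S B"
  shows "continuous_on S (\<lambda>x. A x ** B x)"
  unfolding matrix_matrix_mult_def
  by (intro continuous_intros continuous_on_vec_lambda continuous_on_component assms)

lemma sum_swap_inner: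
  "(\<Sum>i\<in>I. \<Sum>j\<in>J. \<Sum>k\<in>K. \<Sum>a\<in>A. F i j k a) = (\<Sum>a\<in>A. \<Sum>i\<in>I. \<Sum>j\<in>J. \<Sum>k\<in>K. F i j k a)"
proof -
  have "(\<Sum>i\<in>I. \<Sum>j\<in>J. \<Sum>k\<in>K. \<Sum>a\<in>A. F i j k a) = (\<Sum>i\<in>I. \<Sum>j\<in>J. \<Sum>a\<in>A. \<Sum>k\<in>K. F i j k a)"
    by (intro sum.cong refl sum.swap)
  also have "\<dots> = (\<Sum>i\<in>I. \<Sum>a\<in>A. \<Sum>j\<in>J. \<Sum>k\<in>K. F i j k a)"
    by (intro sum.cong refl sum.swap)
  also have "\<dots> = (\<Sum>a\<in>A. \<Sum>i\<in>I. \<Sum>j\<in>J. \<Sum>k\<in>K. F i j k a)"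
    by (rule sum.swap)
  finally show ?thesis .
qed

lemma sum_swap_triple:
  "(\<Sum>i\<in>I. \<Sum>j\<in>J. \<Sum>k\<in>K. \<Sum>a\<in>A. \<Sum>b\<in>B. \<Sum>d\<in>D. F i j k a b d) =
   (\<Sum>a\<in>A. \<Sum>b\<in>B. \<Sum>d\<in>D. \<Sum>i\<in>I. \<Sum>j\<in>J. \<Sum>k\<in>K. F i j k a b d)"
proof -
  have "(\<Sum>i\<in>I. \<Sum>j\<in>J. \<Sum>k\<in>K. \<Sum>a\<in>A. \<Sum>b\<in>B. \<Sum>d\<in>D. F i j k a b d) =
        (\<Sum>a\<in>A. \<Sum>i\<in>I. \<Sum>j\<in>J. \<Sum>k\<in>K. \<Sum>b\<in>B. \<Sum>d\<in>D. F i j k a b d)"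
    by (rule sum_swap_inner)
  also have "\<dots> = (\<Sum>a\<in>A. \<Sum>b\<in>B. \<Sum>i\<in>I. \<Sum>j\<in>J. \<Sum>k\<in>K. \<Sum>d\<in>D. F i j k a b d)"
    by (intro sum.cong refl sum_swap_inner)
  also have "\<dots> = (\<Sum>a\<in>A. \<Sum>b\<in>B. \<Sum>d\<in>D. \<Sum>i\<in>I. \<Sum>j\<in>J. \<Sum>k\<in>K. F i j k a b d)"
    by (intro sum.cong refl sum_swap_inner)
  finally show ?thesis .
qed

definition transform_constants ::
  "'a::comm_ring_1^'n::finite^'n \<Rightarrow> ('n \<Rightarrow> 'n \<Rightarrow> 'n \<Rightarrow> 'a) \<Rightarrow> ('n \<Rightarrow> 'n \<Rightarrow> 'n \<Rightarrow> 'a)" where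
  "transform_constants U c i' j' k' =
     (\<Sum>i\<in>UNIV. \<Sum>j\<in>UNIV. \<Sum>k\<in>UNIV. U $ i $ i' * U $ j $ j' * matrix_inv U $ k' $ k * c i j k)"

lemma contracts_iff_transform_constants:
  "contracts U c c' \<longleftrightarrow>
     continuous_on {0<..1} U \<and> (\<forall>e\<in>{0<..1}. invertible (U e)) \<and>
     (\<forall>i j k. ((\<lambda>e. transform_constants (U e) c i j k) \<longlongrightarrow> c' i j k) (at_right 0))"
  unfolding contracts_def transform_constants_def ..

lemma transform_constants_mult:
  fixes A B :: "'a::comm_ring_1^'n::finite^'n"
  assumes "invertible A" "invertible B"
  shows "transform_constants (A ** B) c = transform_constants B (transform_constants A c)"
proof (intro ext)
  fix i' j' k'
  define F where "F i j k a b d =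
    B $ a $ i' * B $ b $ j' * matrix_inv B $ k' $ d * (A $ i $ a * A $ j $ b * matrix_inv A $ d $ k * c i j k)"
    for i j k a b d
  have "transform_constants (A ** B) c i' j' k' =
      (\<Sum>i\<in>UNIV. \<Sum>j\<in>UNIV. \<Sum>k\<in>UNIV. \<Sum>b\<in>UNIV. \<Sum>a\<in>UNIV. \<Sum>d\<in>UNIV. F i j k a b d)"
    unfolding transform_constants_def matrix_inv_mult[OF assms] F_def
    by (simp add: matrix_matrix_mult_def sum_distrib_left sum_distrib_right mult_ac)
  also have "\<dots> = (\<Sum>b\<in>UNIV. \<Sum>a\<in>UNIV. \<Sum>d\<in>UNIV. \<Sum>i\<in>UNIV. \<Sum>j\<in>UNIV. \<Sum>k\<in>UNIV. F i j k a b d)"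
    by (rule sum_swap_triple)
  also have "\<dots> = (\<Sum>a\<in>UNIV. \<Sum>b\<in>UNIV. \<Sum>d\<in>UNIV. \<Sum>i\<in>UNIV. \<Sum>j\<in>UNIV. \<Sum>k\<in>UNIV. F i j k a b d)"
    by (rule sum.swap)
  also have "\<dots> = transform_constants B (transform_constants A c) i' j' k'"
    by (simp add: F_def transform_constants_def sum_distrib_left)
  finally show "transform_constants (A ** B) c i' j' k' =
    transform_constants B (transform_constants A c) i' j' k'" .
qed

lemma transform_constants_diff:
  "transform_constants U (\<lambda>i j k. c i j k - c' i j k) i' j' k' =
   transform_constants U c i' j' k' - transform_constants U c' i' j' k'"
  unfolding transform_constants_def by (simp add: sum_subtractf right_diff_distrib)

definition entry_norm :: "'a::real_normed_vector^'n::finite^'m::finite \<Rightarrow> real" where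
  "entry_norm A = (\<Sum>i\<in>UNIV. \<Sum>j\<in>UNIV. norm (A $ i $ j))"

lemma norm_le_entry_norm: "norm (A $ i $ j) \<le> entry_norm A"
proof -
  have "norm (A $ i $ j) \<le> (\<Sum>j\<in>UNIV. norm (A $ i $ j))"
    by (rule member_le_sum) auto
  also have "\<dots> \<le> entry_norm A"
    unfolding entry_norm_def by (rule member_le_sum) (auto intro: sum_nonneg)
  finally show ?thesis .
qed

lemma continuous_on_entry_norm:
  "continuous_on S A \<Longrightarrow> continuous_on S (\<lambda>x. entry_norm (A x))"
  unfolding entry_norm_def by (intro continuous_intros)

lemma norm_transform_constants_le:
  fixes U :: "'a::real_normed_field^'n::finite^'n"
  shows "norm (transform_constants U c i' j' k') \<le>
    entry_norm U ^ 2 * entry_norm (matrix_inv U) *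
    (\<Sum>i\<in>UNIV. \<Sum>j\<in>UNIV. \<Sum>k\<in>UNIV. norm (c i j k))"
proof -
  have "norm (transform_constants U c i' j' k') \<le> (\<Sum>i\<in>UNIV. \<Sum>j\<in>UNIV. \<Sum>k\<in>UNIV.
      norm (U $ i $ i') * norm (U $ j $ j') * norm (matrix_inv U $ k' $ k) * norm (c i j k))"
    unfolding transform_constants_def
    by (intro order_trans[OF norm_sum] sum_mono) (simp add: norm_mult)
  also have "\<dots> \<le> (\<Sum>i\<in>UNIV. \<Sum>j\<in>UNIV. \<Sum>k\<in>UNIV.
      entry_norm U * entry_norm U * entry_norm (matrix_inv U) * norm (c i j k))"
    by (intro sum_mono mult_right_mono mult_mono norm_le_entry_norm)
      (auto intro: order_trans[OF _ norm_le_entry_norm])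
  also have "\<dots> = entry_norm U ^ 2 * entry_norm (matrix_inv U) *
      (\<Sum>i\<in>UNIV. \<Sum>j\<in>UNIV. \<Sum>k\<in>UNIV. norm (c i j k))"
    by (simp add: sum_distrib_left power2_eq_square)
  finally show ?thesis .
qed

lemma eventually_at_right_0_unit_interval: "\<forall>\<^sub>F e in at_right 0. e \<in> {0<..1::real}"
  unfolding eventually_at_right_field by (intro exI[where x=1]) auto

lemma continuous_mono_minorant:
  fixes \<psi> :: "real \<Rightarrow> real"
  assumes pos: "\<And>e. e \<in> {0<..1} \<Longrightarrow> 0 < \<psi> e" and mono: "mono_on {0<..1} \<psi>"
  obtains f where "continuous_on {0<..1} f" "mono_on {0<..1} f"
    "\<And>e. e \<in> {0<..1} \<Longrightarrow> 0 < f e \<and> f e \<le> \<psi> e"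
proof -
  \<comment> \<open>the largest 1-Lipschitz minorant of \<psi>\<close>
  define f where "f e = (INF t\<in>{0<..1}. \<psi> t + \<bar>e - t\<bar>)" for e
  have bdd: "bdd_below ((\<lambda>t. \<psi> t + \<bar>e - t\<bar>) ` {0<..1})" for e
    by (rule bdd_belowI2[where m=0]) (simp add: less_imp_le pos)
  have f_le: "f e \<le> \<psi> t + \<bar>e - t\<bar>" if "t \<in> {0<..1}" for e t
    unfolding f_def using bdd that by (rule cINF_lower)
  have f_ge: "m \<le> f e" if "\<And>t. t \<in> {0<..1} \<Longrightarrow> m \<le> \<psi> t + \<bar>e - t\<bar>" for m e
    unfolding f_def using that by (intro cINF_greatest) auto
  have f_lip: "f e \<le> f e' + \<bar>e - e'\<bar>" for e e'
    using f_ge[of "f e - \<bar>e - e'\<bar>" e'] f_le[of _ e] by fastforce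
  have "1-lipschitz_on {0<..1} f"
  proof (rule lipschitz_onI)
    fix e e' :: real
    show "dist (f e) (f e') \<le> 1 * dist e e'"
      using f_lip[of e e'] f_lip[of e' e] by (simp add: dist_real_def abs_le_iff abs_minus_commute)
  qed simp
  then have "continuous_on {0<..1} f"
    by (rule lipschitz_on_continuous_on)
  moreover have "mono_on {0<..1} f"
  proof (rule mono_onI)
    fix e e' :: real assume e: "e \<in> {0<..1}" and "e' \<in> {0<..1}" "e \<le> e'"
    show "f e \<le> f e'"
    proof (rule f_ge)
      fix t :: real assume t: "t \<in> {0<..1}"
      show "f e \<le> \<psi> t + \<bar>e' - t\<bar>"
      proof (cases "t \<le> e")
        case True
        then show ?thesis using f_le[OF t, of e] \<open>e \<le> e'\<close> by linarith
      next
        case False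
        then have "\<psi> e \<le> \<psi> t" using mono_onD[OF mono e t] by simp
        then show ?thesis using f_le[OF e, of e] by linarith
      qed
    qed
  qed
  moreover have "0 < f e \<and> f e \<le> \<psi> e" if e: "e \<in> {0<..1}" for e
  proof
    have "0 < min (\<psi> (e/2)) (e/2)" using pos[of "e/2"] e by simp
    also have "\<dots> \<le> f e"
    proof (rule f_ge)
      fix t :: real assume t: "t \<in> {0<..1}"
      show "min (\<psi> (e/2)) (e/2) \<le> \<psi> t + \<bar>e - t\<bar>"
      proof (cases "e/2 \<le> t")
        case True
        then show ?thesis using mono_onD[OF mono _ t, of "e/2"] e by auto
      next
        case False
        then show ?thesis using pos[OF t] by auto
      qed
    qed
    finally show "0 < f e" .
    show "f e \<le> \<psi> e" using f_le[OF e, of e] by simp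
  qed
  ultimately show ?thesis by (rule that)
qed

lemma continuous_on_antimono_majorant:
  fixes M :: "real \<Rightarrow> 'a::real_normed_vector"
  assumes "continuous_on {0<..1} M"
  obtains K where "antimono_on {0<..1} K" "\<And>e. e \<in> {0<..1} \<Longrightarrow> norm (M e) < K e"
proof -
  define K where "K e = (SUP t\<in>{e..1}. norm (M t)) + 1" for e
  have bdd: "bdd_above ((\<lambda>t. norm (M t)) ` {e..1})" if "e \<in> {0<..1}" for e
  proof -
    have "continuous_on {e..1} (\<lambda>t. norm (M t))"
      using that by (intro continuous_intros continuous_on_subset[OF assms]) auto
    then have "compact ((\<lambda>t. norm (M t)) ` {e..1})"
      by (intro compact_continuous_image) auto
    then show ?thesis
      by (intro bounded_imp_bdd_above compact_imp_bounded)
  qed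
  have "antimono_on {0<..1} K"
    unfolding K_def by (intro monotone_onI add_right_mono cSUP_subset_mono bdd) auto
  moreover have "norm (M e) < K e" if "e \<in> {0<..1}" for e
    using cSUP_upper[OF _ bdd[OF that], of e] that unfolding K_def by auto
  ultimately show ?thesis by (rule that)
qed

lemma tendsto_at_right_0_mono_radius:
  fixes \<delta> :: "real \<Rightarrow> 'a::real_normed_vector"
  assumes "(\<delta> \<longlongrightarrow> 0) (at_right 0)"
  obtains r where "\<And>x. 0 < x \<Longrightarrow> r x \<in> {0<..1}" "\<And>x y. 0 < x \<Longrightarrow> x \<le> y \<Longrightarrow> r x \<le> r y"
    "\<And>x t. 0 < x \<Longrightarrow> t \<in> {0<..r x} \<Longrightarrow> norm (\<delta> t) \<le> x"
proof -
  define A where "A x = {s \<in> {0<..1}. \<forall>t\<in>{0<..s}. norm (\<delta> t) \<le> x}" for x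
  define r where "r x = Sup (A x) / 2" for x
  have A_ne: "A x \<noteq> {}" if "0 < x" for x
  proof -
    obtain b where "0 < b" and b: "\<And>t. 0 < t \<Longrightarrow> t < b \<Longrightarrow> norm (\<delta> t) < x"
      using tendstoD[OF assms \<open>0 < x\<close>] by (auto simp: eventually_at_right_field)
    then have "min (b/2) 1 \<in> A x" by (auto simp: A_def intro!: less_imp_le[OF b])
    then show ?thesis by blast
  qed
  have A_bdd: "bdd_above (A x)" for x
    by (rule bdd_aboveI[where M=1]) (auto simp: A_def)
  have "r x \<in> {0<..1} \<and> (\<forall>y\<ge>x. r x \<le> r y) \<and> (\<forall>t\<in>{0<..r x}. norm (\<delta> t) \<le> x)"
    if "0 < x" for x
  proof (intro conjI allI impI ballI)
    obtain s where "s \<in> A x" using A_ne[OF \<open>0 < x\<close>] by blast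
    then have "0 < Sup (A x)"
      using cSup_upper[OF _ A_bdd] by (fastforce simp: A_def)
    moreover have "Sup (A x) \<le> 1"
      using A_ne[OF \<open>0 < x\<close>] by (intro cSup_least) (auto simp: A_def)
    ultimately show "r x \<in> {0<..1}" by (simp add: r_def)
    show "r x \<le> r y" if "x \<le> y" for y
      using that A_ne[OF \<open>0 < x\<close>] A_bdd unfolding r_def
      by (intro divide_right_mono cSup_subset_mono) (auto simp: A_def)
    fix t assume t: "t \<in> {0<..r x}"
    then have "t < Sup (A x)" using \<open>0 < Sup (A x)\<close> by (simp add: r_def)
    then obtain s where "s \<in> A x" "t < s" using less_cSupE A_ne[OF \<open>0 < x\<close>] by blast
    then show "norm (\<delta> t) \<le> x" using t by (auto simp: A_def)
  qed
  then show ?thesis using that by blast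
qed

lemma exists_slow_reparametrization:
  fixes M \<delta> :: "real \<Rightarrow> real"
  assumes M: "continuous_on {0<..1} M" and \<delta>: "(\<delta> \<longlongrightarrow> 0) (at_right 0)"
  shows "\<exists>f. continuous_on {0<..1} f \<and> f ` {0<..1} \<subseteq> {0<..1} \<and> mono_on {0<..1} f \<and>
     (f \<longlongrightarrow> 0) (at_right 0) \<and> ((\<lambda>e. M e * \<delta> (f e)) \<longlongrightarrow> 0) (at_right 0)"
proof -
  obtain K where K_anti: "antimono_on {0<..1} K" and M_K: "\<And>e. e \<in> {0<..1} \<Longrightarrow> norm (M e) < K e"
    using continuous_on_antimono_majorant[OF M] by blast
  obtain r where r: "\<And>x. 0 < x \<Longrightarrow> r x \<in> {0<..1}"
    and r_mono: "\<And>x y. 0 < x \<Longrightarrow> x \<le> y \<Longrightarrow> r x \<le> r y"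
    and r_\<delta>: "\<And>x t. 0 < x \<Longrightarrow> t \<in> {0<..r x} \<Longrightarrow> norm (\<delta> t) \<le> x"
    using tendsto_at_right_0_mono_radius[OF \<delta>] by blast
  have K_pos: "0 < K e" if "e \<in> {0<..1}" for e
    using M_K[OF that] norm_ge_zero[of "M e"] by linarith
  \<comment> \<open>\<open>f e \<le> r (e / K e)\<close> forces \<open>\<bar>\<delta> (f e)\<bar> \<le> e / K e\<close>, hence \<open>\<bar>M e * \<delta> (f e)\<bar> \<le> e\<close>\<close>
  define \<psi> where "\<psi> e = min (r (e / K e)) e" for e
  have \<psi>_mono: "mono_on {0<..1} \<psi>"
  proof (rule mono_onI)
    fix e e' :: real assume e: "e \<in> {0<..1}" and e': "e' \<in> {0<..1}" and "e \<le> e'"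
    have "e / K e \<le> e' / K e'"
      using \<open>e \<le> e'\<close> monotone_onD[OF K_anti e e' \<open>e \<le> e'\<close>] K_pos[OF e] K_pos[OF e'] e
      by (simp add: frac_le)
    then show "\<psi> e \<le> \<psi> e'"
      using r_mono[of "e / K e"] K_pos[OF e] e \<open>e \<le> e'\<close>
      by (simp add: \<psi>_def min.coboundedI1 min.coboundedI2)
  qed
  have \<psi>_pos: "0 < \<psi> e" if "e \<in> {0<..1}" for e
    using r[of "e / K e"] K_pos[OF that] that by (simp add: \<psi>_def)
  obtain f where f_cont: "continuous_on {0<..1} f" and f_mono: "mono_on {0<..1} f"
    and f_\<psi>: "\<And>e. e \<in> {0<..1} \<Longrightarrow> 0 < f e \<and> f e \<le> \<psi> e"
    using continuous_mono_minorant[of \<psi>, OF \<psi>_pos \<psi>_mono] by blast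
  have f_bounds: "0 < f e" "f e \<le> e" if "e \<in> {0<..1}" for e
    using f_\<psi>[OF that] by (simp_all add: \<psi>_def)
  have "(f \<longlongrightarrow> 0) (at_right 0)"
  proof (rule tendsto_sandwich[OF _ _ tendsto_const tendsto_ident_at])
    show "\<forall>\<^sub>F e in at_right 0. 0 \<le> f e"
      using eventually_at_right_0_unit_interval by eventually_elim (metis f_bounds(1) less_imp_le)
    show "\<forall>\<^sub>F e in at_right 0. f e \<le> e"
      using eventually_at_right_0_unit_interval by eventually_elim (rule f_bounds(2))
  qed
  moreover have "((\<lambda>e. M e * \<delta> (f e)) \<longlongrightarrow> 0) (at_right 0)"
  proof (rule Lim_null_comparison[OF _ tendsto_ident_at])
    show "\<forall>\<^sub>F e in at_right 0. norm (M e * \<delta> (f e)) \<le> e"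
      using eventually_at_right_0_unit_interval
    proof (rule eventually_mono)
      fix e :: real assume e: "e \<in> {0<..1}"
      have "\<bar>\<delta> (f e)\<bar> \<le> e / K e"
        using r_\<delta>[of "e / K e" "f e"] f_\<psi>[OF e] K_pos[OF e] e by (simp add: \<psi>_def)
      then have "\<bar>M e\<bar> * \<bar>\<delta> (f e)\<bar> \<le> K e * (e / K e)"
        using M_K[OF e] by (intro mult_mono) auto
      then show "norm (M e * \<delta> (f e)) \<le> e"
        using K_pos[OF e] by (simp add: abs_mult)
    qed
  qed
  moreover have "f ` {0<..1} \<subseteq> {0<..1}"
    using f_bounds by force
  ultimately show ?thesis using f_cont f_mono by blast
qed

lemma norm_transform_constants_mult_diff_le:
  fixes A B :: "'a::real_normed_field^'n::finite^'n"
  assumes "invertible A" "invertible B"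
  shows "norm (transform_constants (A ** B) c i' j' k' - transform_constants B c' i' j' k') \<le>
    entry_norm B ^ 2 * entry_norm (matrix_inv B) *
    (\<Sum>i\<in>UNIV. \<Sum>j\<in>UNIV. \<Sum>k\<in>UNIV. norm (transform_constants A c i j k - c' i j k))"
  using norm_transform_constants_le[of B "\<lambda>i j k. transform_constants A c i j k - c' i j k" i' j' k']
  by (simp add: transform_constants_mult[OF assms] transform_constants_diff)

lemma contracts_reparametrized_product:
  fixes Uh Ut :: "real \<Rightarrow> 'a::real_normed_field^'n::finite^'n"
  assumes "contracts Uh c ch" and "contracts Ut ch ct"
  shows "\<exists>f. continuous_on {0<..1} f \<and> f ` {0<..1} \<subseteq> {0<..1} \<and> mono_on {0<..1} f \<and>
    (f \<longlongrightarrow> 0) (at_right 0) \<and> contracts (\<lambda>e. Uh (f e) ** Ut e) c ct"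
proof -
  have Uh_cont: "continuous_on {0<..1} Uh" and Uh_inv: "\<And>e. e \<in> {0<..1} \<Longrightarrow> invertible (Uh e)"
    and Uh_lim: "\<And>i j k. ((\<lambda>e. transform_constants (Uh e) c i j k) \<longlongrightarrow> ch i j k) (at_right 0)"
    using assms(1) unfolding contracts_iff_transform_constants by auto
  have Ut_cont: "continuous_on {0<..1} Ut" and Ut_inv: "\<And>e. e \<in> {0<..1} \<Longrightarrow> invertible (Ut e)"
    and Ut_lim: "\<And>i j k. ((\<lambda>e. transform_constants (Ut e) ch i j k) \<longlongrightarrow> ct i j k) (at_right 0)"
    using assms(2) unfolding contracts_iff_transform_constants by auto
  define \<delta> where
    "\<delta> s = (\<Sum>i\<in>UNIV. \<Sum>j\<in>UNIV. \<Sum>k\<in>UNIV. norm (transform_constants (Uh s) c i j k - ch i j k))" for s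
  define M where "M e = entry_norm (Ut e) ^ 2 * entry_norm (matrix_inv (Ut e))" for e
  have "(\<delta> \<longlongrightarrow> 0) (at_right 0)"
    unfolding \<delta>_def by (intro tendsto_null_sum tendsto_norm_zero LIM_zero Uh_lim)
  moreover have "continuous_on {0<..1} M"
    unfolding M_def
    by (intro continuous_intros continuous_on_entry_norm continuous_on_matrix_inv Ut_cont Ut_inv)
  ultimately obtain f where f_cont: "continuous_on {0<..1} f" and f_img: "f ` {0<..1} \<subseteq> {0<..1}"
    and f_mono: "mono_on {0<..1} f" and f_lim: "(f \<longlongrightarrow> 0) (at_right 0)"
    and M\<delta>_lim: "((\<lambda>e. M e * \<delta> (f e)) \<longlongrightarrow> 0) (at_right 0)"
    using exists_slow_reparametrization by blast
  have inv: "invertible (Uh (f e)) \<and> invertible (Ut e)" if "e \<in> {0<..1}" for e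
    using that f_img Uh_inv Ut_inv by blast
  have "((\<lambda>e. transform_constants (Uh (f e) ** Ut e) c i j k) \<longlongrightarrow> ct i j k) (at_right 0)" for i j k
  proof -
    have "((\<lambda>e. transform_constants (Uh (f e) ** Ut e) c i j k - transform_constants (Ut e) ch i j k)
        \<longlongrightarrow> 0) (at_right 0)"
      using eventually_at_right_0_unit_interval
      by (rule Lim_null_comparison[OF eventually_mono M\<delta>_lim])
        (simp add: M_def \<delta>_def inv norm_transform_constants_mult_diff_le)
    from tendsto_add[OF this Ut_lim[of i j k]] show ?thesis by simp
  qed
  moreover have "continuous_on {0<..1} (\<lambda>e. Uh (f e) ** Ut e)"
    by (intro continuous_on_matrix_mult Ut_cont continuous_on_compose2[OF Uh_cont f_cont f_img])
  ultimately have "contracts (\<lambda>e. Uh (f e) ** Ut e) c ct"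
    unfolding contracts_iff_transform_constants using inv invertible_mult by blast
  then show ?thesis using f_cont f_img f_mono f_lim by blast
qed

theorem mainTheorem11:
  shows
  "(\<forall>(Uh :: real \<Rightarrow> real^'n::finite^'n) (Ut :: real \<Rightarrow> real^'n^'n)
       (c :: 'n \<Rightarrow> 'n \<Rightarrow> 'n \<Rightarrow> real) ch ct.
      is_lie_structure_constants c \<and> contracts Uh c ch \<and> contracts Ut ch ct \<longrightarrow>
      (\<exists>f :: real \<Rightarrow> real.
         continuous_on {0<..1} f \<and> f ` {0<..1} \<subseteq> {0<..1} \<and> mono_on {0<..1} f \<and>
         (f \<longlongrightarrow> 0) (at_right 0) \<and>
         contracts (\<lambda>e. Uh (f e) ** Ut e) c ct))
   \<and>
   (\<forall>(Uh :: real \<Rightarrow> complex^'n^'n) (Ut :: real \<Rightarrow> complex^'n^'n)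
       (c :: 'n \<Rightarrow> 'n \<Rightarrow> 'n \<Rightarrow> complex) ch ct.
      is_lie_structure_constants c \<and> contracts Uh c ch \<and> contracts Ut ch ct \<longrightarrow>
      (\<exists>f :: real \<Rightarrow> real.
         continuous_on {0<..1} f \<and> f ` {0<..1} \<subseteq> {0<..1} \<and> mono_on {0<..1} f \<and>
         (f \<longlongrightarrow> 0) (at_right 0) \<and>
         contracts (\<lambda>e. Uh (f e) ** Ut e) c ct))"
  by (blast dest: contracts_reparametrized_product)

end
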